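(* Let $T_1,\dots,T_m$ be conjunctions over variables $x_1,\dots,x_n$, presented online, each of which is the union of some subset of metafeatures $m_1,\dots,m_k$ satisfying the anchor-variable condition. Consider the following online procedure (Algorithm 4): initialize $\mathrm{TS}=\emptyset$ and $\tilde M=\emptyset$; for $r=1,\dots,m$, if $T_r$ is not equal to the union of the metafeatures in $\tilde M$ contained in $T_r$, then ("learning $T_r$ from scratch") append $T_r$ to $\mathrm{TS}$ and replace $\tilde M$ by the output of Algorithm 3 run on $\mathrm{TS}$. Then the number of targets learned from scratch (appended to $\mathrm{TS}$) is at most $n^2+k$.
   Context: A conjunction/monomial is identified with its set of variables. Metafeatures $m_1,\dots,m_k$ satisfy the anchor-variable condition if each $m_i$ contains a variable $y_i$ belonging to no other $m_j$. For a variable $z$, $N(\mathrm{TS},z)$ is the set of conjunctions in $\mathrm{TS}$ containing $z$. Algorithm 3, on an ordered list $\mathrm{TS}$ of conjunctions: start with no hypothesized metafeatures; for a conjunction $T$ let $h(T)$ be the union of all hypothesized metafeatures produced so far contained in $T$; while some $T\in\mathrm{TS}$ has $T\ne h(T)$, take the least-index such $T$, choose $z\in T\setminus h(T)$ minimal in the sense that no $z'\in T\setminus h(T)$ has $N(\mathrm{TS},z')\subsetneq N(\mathrm{TS},z)$ (ties broken by least variable index), and add the metafeature $\bigcap_{T'\in\mathrm{TS},\,z\in T'}T'$. Output all metafeatures produced. *)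

theory Defs
  imports Main "HOL-Library.While_Combinator"
begin

text \<open>Conjunctions / monomials are identified with their sets of variables
(variables are natural numbers; the variables x_1..x_n are 0..n-1).\<close>

definition anchor_condition :: "(nat \<Rightarrow> nat set) \<Rightarrow> nat \<Rightarrow> bool" where
  "anchor_condition M k \<longleftrightarrow>
     (\<forall>i<k. \<exists>y\<in>M i. \<forall>j<k. j \<noteq> i \<longrightarrow> y \<notin> M j)"

definition hyp_union :: "nat set set \<Rightarrow> nat set \<Rightarrow> nat set" where
  "hyp_union H T = \<Union>{m \<in> H. m \<subseteq> T}"

definition nbhd :: "nat set list \<Rightarrow> nat \<Rightarrow> nat set set" where
  "nbhd TS z = {T' \<in> set TS. z \<in> T'}"

definition alg3_step :: "nat set list \<Rightarrow> nat set set \<Rightarrow> nat set set" where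
  "alg3_step TS H =
     (let T = hd (filter (\<lambda>T. T \<noteq> hyp_union H T) TS);
          D = T - hyp_union H T;
          z = (LEAST z. z \<in> D \<and> \<not> (\<exists>z'\<in>D. nbhd TS z' \<subset> nbhd TS z))
      in insert (\<Inter>{T' \<in> set TS. z \<in> T'}) H)"

definition alg3 :: "nat set list \<Rightarrow> nat set set" where
  "alg3 TS = while (\<lambda>H. \<exists>T\<in>set TS. T \<noteq> hyp_union H T) (alg3_step TS) {}"

definition alg4_round :: "nat set list \<times> nat set set \<Rightarrow> nat set \<Rightarrow> nat set list \<times> nat set set" where
  "alg4_round st T =
     (let (TS, Mt) = st in
      if T \<noteq> hyp_union Mt T then (TS @ [T], alg3 (TS @ [T])) else (TS, Mt))"

definition alg4 :: "nat set list \<Rightarrow> nat set list \<times> nat set set" where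
  "alg4 Ts = foldl alg4_round ([], {}) Ts"

end

theory Submission
  imports Defs
begin

text \<open>Write \<open>cl z\<close> for the intersection of the stored targets containing \<open>z\<close>. Algorithm 3
  only produces such closures, and afterwards every stored target is the union of the hypotheses
  it contains; hence a closure \<open>cl v\<close> that is \<open>\<subseteq>\<close>-maximal among the closures of the variables
  of a stored target is a hypothesis. Storing a target \<open>T\<close> that the hypotheses do not explain
  decreases the potential \<open>\<Sum>z<n. |cl z| + [z is an anchor whose closure is not maximal]\<close>.
  If some closure shrinks, some term drops: otherwise every variable with a shrinking closure
  would be an anchor losing maximality, and a variable whose new closure is \<open>\<subset>\<close>-maximal among
  these would be dominated inside \<open>T\<close> by a variable whose closure shrinks as well. If no closure
  changes, the anchor of a metafeature carrying an unexplained variable of \<open>T\<close> becomes maximal.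
  The potential starts at most at \<open>n (n + 1) + k\<close> and never drops below \<open>n\<close>.\<close>

lemma exists_maximal_image:
  fixes f :: "'a \<Rightarrow> 'b set"
  assumes "finite (f ` A)" and "a \<in> A"
  shows "\<exists>u\<in>A. f a \<subseteq> f u \<and> (\<forall>w\<in>A. \<not> f u \<subset> f w)"
proof -
  have "f a \<in> f ` A"
    using assms(2) by (rule imageI)
  from finite_has_maximal2[OF assms(1) this]
  obtain X where "X \<in> f ` A" "f a \<subseteq> X" and X: "\<forall>Y\<in>f ` A. X \<subseteq> Y \<longrightarrow> X = Y"
    by (elim bexE conjE)
  then obtain u where u: "u \<in> A" "X = f u"
    by blast
  have "\<not> f u \<subset> f w" if "w \<in> A" for w
    using X[rule_format, of "f w"] that u(2) by (auto simp: psubset_eq)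
  with u \<open>f a \<subseteq> X\<close> show ?thesis
    by blast
qed

lemma hyp_union_subset: "hyp_union H T \<subseteq> T"
  by (auto simp: hyp_union_def)

lemma hyp_union_mono: "H \<subseteq> H' \<Longrightarrow> hyp_union H T \<subseteq> hyp_union H' T"
  by (auto simp: hyp_union_def)

subsection \<open>Closures of variables\<close>

definition var_closure :: "nat set list \<Rightarrow> nat \<Rightarrow> nat set" where
  "var_closure TS z = \<Inter>{T \<in> set TS. z \<in> T}"

lemma var_closure_mem: "z \<in> var_closure TS z"
  by (auto simp: var_closure_def)

lemma var_closure_subset: "T \<in> set TS \<Longrightarrow> z \<in> T \<Longrightarrow> var_closure TS z \<subseteq> T"
  by (auto simp: var_closure_def)

lemma var_closure_trans: "u \<in> var_closure TS v \<Longrightarrow> var_closure TS u \<subseteq> var_closure TS v"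
  by (auto simp: var_closure_def)

lemma var_closure_bounded:
  assumes "\<forall>T\<in>set TS. T \<subseteq> {..<n}" and "z \<in> \<Union>(set TS)"
  shows "var_closure TS z \<subseteq> {..<n}"
  using assms var_closure_subset by blast

lemma finite_var_closure:
  assumes "\<forall>T\<in>set TS. T \<subseteq> {..<n}" and "z \<in> \<Union>(set TS)"
  shows "finite (var_closure TS z)"
  using var_closure_bounded[OF assms] finite_subset by blast

lemma card_var_closure_le:
  assumes "\<forall>T\<in>set TS. T \<subseteq> {..<n}" and "z \<in> \<Union>(set TS)"
  shows "card (var_closure TS z) \<le> n"
  using card_mono[OF _ var_closure_bounded[OF assms]] by simp

lemma var_closure_append_subset: "var_closure (TS @ [T]) z \<subseteq> var_closure TS z"
  by (auto simp: var_closure_def)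

lemma var_closure_append_notin: "z \<notin> T \<Longrightarrow> var_closure (TS @ [T]) z = var_closure TS z"
  unfolding var_closure_def by (rule arg_cong[where f = Inter]) auto

lemma var_closure_append_in: "z \<in> T \<Longrightarrow> var_closure (TS @ [T]) z = var_closure TS z \<inter> T"
  by (auto simp: var_closure_def)

subsection \<open>Algorithm 3\<close>

definition consistent_hypothesis :: "nat set list \<Rightarrow> nat set set \<Rightarrow> bool" where
  "consistent_hypothesis TS H \<longleftrightarrow>
     (\<forall>T\<in>set TS. T = hyp_union H T) \<and> (\<forall>m\<in>H. \<exists>z. m = var_closure TS z)"

lemma alg3_step_eq:
  assumes "\<exists>T\<in>set TS. T \<noteq> hyp_union H T"
  shows "\<exists>z T. alg3_step TS H = insert (var_closure TS z) H \<and>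
           T \<in> set TS \<and> z \<in> T - hyp_union H T \<and> var_closure TS z \<subseteq> T"
proof -
  define T where "T = hd (filter (\<lambda>T. T \<noteq> hyp_union H T) TS)"
  define D where "D = T - hyp_union H T"
  define z where "z = (LEAST z. z \<in> D \<and> \<not> (\<exists>z'\<in>D. nbhd TS z' \<subset> nbhd TS z))"
  have "T \<in> set (filter (\<lambda>T. T \<noteq> hyp_union H T) TS)"
    unfolding T_def using assms by (intro hd_in_set) (auto simp: filter_empty_conv)
  then have T: "T \<in> set TS" "T \<noteq> hyp_union H T" by auto
  then obtain z0 where "z0 \<in> D"
    using hyp_union_subset[of H T] unfolding D_def by blast
  \<comment> \<open>the variable chosen by the algorithm exists because neighbourhoods are finite\<close>
  then obtain z1 where z1: "z1 \<in> D" "\<forall>y\<in>D. card (nbhd TS z1) \<le> card (nbhd TS y)"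
    using ex_has_least_nat[of "\<lambda>z. z \<in> D" z0 "\<lambda>z. card (nbhd TS z)"] by blast
  have "finite (nbhd TS z1)"
    by (simp add: nbhd_def)
  then have "\<not> (\<exists>z'\<in>D. nbhd TS z' \<subset> nbhd TS z1)"
    using z1(2) by (meson leD psubset_card_mono)
  with z1(1) have z: "z \<in> D"
    using LeastI[of "\<lambda>z. z \<in> D \<and> \<not> (\<exists>z'\<in>D. nbhd TS z' \<subset> nbhd TS z)" z1]
    unfolding z_def by blast
  have "alg3_step TS H = insert (var_closure TS z) H"
    unfolding alg3_step_def Let_def var_closure_def
    by (simp only: T_def[symmetric] D_def[symmetric] z_def[symmetric])
  with T(1) z show ?thesis
    unfolding D_def using var_closure_subset by blast
qed

lemma alg3_consistent:
  assumes fin: "\<forall>T\<in>set TS. finite T"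
  shows "consistent_hypothesis TS (alg3 TS)"
  unfolding alg3_def consistent_hypothesis_def
proof (rule while_rule[where P = "\<lambda>H. \<forall>m\<in>H. \<exists>z. m = var_closure TS z"
      and r = "measure (\<lambda>H. card (SIGMA T:set TS. T - hyp_union H T))"])
  fix H assume P: "\<forall>m\<in>H. \<exists>z. m = var_closure TS z"
    and b: "\<exists>T\<in>set TS. T \<noteq> hyp_union H T"
  then obtain z T where step: "alg3_step TS H = insert (var_closure TS z) H"
    and T: "T \<in> set TS" "z \<in> T - hyp_union H T" "var_closure TS z \<subseteq> T"
    using alg3_step_eq[OF b] by blast
  show "\<forall>m\<in>alg3_step TS H. \<exists>z. m = var_closure TS z"
    using P step by auto
  \<comment> \<open>each step explains at least one more occurrence of a variable in a target\<close>
  let ?S = "\<lambda>H. SIGMA T:set TS. T - hyp_union H T"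
  have "?S (alg3_step TS H) \<subseteq> ?S H"
    using hyp_union_mono[of H "alg3_step TS H"] step by blast
  moreover have "(T, z) \<in> ?S H - ?S (alg3_step TS H)"
    using T step var_closure_mem[of z TS] by (auto simp: hyp_union_def)
  moreover have "finite (?S H)"
    using fin by auto
  ultimately show "(alg3_step TS H, H) \<in> measure (\<lambda>H. card (?S H))"
    by (auto intro: psubset_card_mono)
qed auto

definition maximal_closure :: "nat set list \<Rightarrow> nat set \<Rightarrow> bool" where
  "maximal_closure TS X \<longleftrightarrow>
     (\<exists>T\<in>set TS. \<exists>v\<in>T. X = var_closure TS v \<and> (\<forall>w\<in>T. \<not> var_closure TS v \<subset> var_closure TS w))"

lemma maximal_closureI:
  assumes "T \<in> set TS" and "v \<in> T" and "\<forall>w\<in>T. \<not> var_closure TS v \<subset> var_closure TS w"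
  shows "maximal_closure TS (var_closure TS v)"
  using assms unfolding maximal_closure_def by blast

lemma maximal_closure_in_hypothesis:
  assumes "consistent_hypothesis TS H" and "maximal_closure TS X"
  shows "X \<in> H"
proof -
  obtain T v where T: "T \<in> set TS" "v \<in> T" "X = var_closure TS v"
    and max: "\<forall>w\<in>T. \<not> var_closure TS v \<subset> var_closure TS w"
    using assms(2) by (auto simp: maximal_closure_def)
  have "v \<in> hyp_union H T"
    using assms(1) T by (auto simp: consistent_hypothesis_def)
  then obtain m where m: "m \<in> H" "m \<subseteq> T" "v \<in> m"
    by (auto simp: hyp_union_def)
  obtain u where u: "m = var_closure TS u"
    using assms(1) m(1) by (auto simp: consistent_hypothesis_def)
  have "u \<in> T"
    using var_closure_mem[of u TS] u m(2) by blast
  moreover have "var_closure TS v \<subseteq> var_closure TS u"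
    using var_closure_trans m(3) u by blast
  ultimately have "var_closure TS v = var_closure TS u"
    using max by blast
  then show ?thesis
    using T(3) u m(1) by simp
qed

subsection \<open>The potential\<close>

definition has_maximal_closure :: "nat set list \<Rightarrow> nat \<Rightarrow> bool" where
  "has_maximal_closure TS z \<longleftrightarrow> z \<in> \<Union>(set TS) \<and> maximal_closure TS (var_closure TS z)"

text \<open>Unseen variables count \<open>n + 1\<close>: their closure is the empty intersection \<open>UNIV\<close>.\<close>

definition closure_size :: "nat \<Rightarrow> nat set list \<Rightarrow> nat \<Rightarrow> nat" where
  "closure_size n TS z = (if z \<in> \<Union>(set TS) then card (var_closure TS z) else Suc n)"

definition potential_at :: "nat \<Rightarrow> nat set \<Rightarrow> nat set list \<Rightarrow> nat \<Rightarrow> nat" where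
  "potential_at n Y TS z =
     closure_size n TS z + (if z \<in> Y \<and> \<not> has_maximal_closure TS z then 1 else 0)"

definition potential :: "nat \<Rightarrow> nat set \<Rightarrow> nat set list \<Rightarrow> nat" where
  "potential n Y TS = (\<Sum>z<n. potential_at n Y TS z)"

lemma has_maximal_closure_append:
  assumes "has_maximal_closure TS z" and "var_closure (TS @ [T]) z = var_closure TS z"
  shows "has_maximal_closure (TS @ [T]) z"
proof -
  obtain T0 v where T0: "T0 \<in> set TS" "v \<in> T0" "var_closure TS z = var_closure TS v"
    and max: "\<forall>w\<in>T0. \<not> var_closure TS v \<subset> var_closure TS w"
    and z: "z \<in> \<Union>(set TS)"
    using assms(1) by (auto simp: has_maximal_closure_def maximal_closure_def)
  have "z \<in> T0"
    using var_closure_mem[of z TS] T0 var_closure_subset by blast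
  moreover have "\<forall>w\<in>T0. \<not> var_closure (TS @ [T]) z \<subset> var_closure (TS @ [T]) w"
    using T0(3) max assms(2) var_closure_append_subset[of TS T] by blast
  moreover have "T0 \<in> set (TS @ [T])"
    using T0(1) by simp
  ultimately have "maximal_closure (TS @ [T]) (var_closure (TS @ [T]) z)"
    by (intro maximal_closureI)
  then show ?thesis
    using z by (simp add: has_maximal_closure_def)
qed

lemma closure_size_append_le:
  assumes "\<forall>T'\<in>set (TS @ [T]). T' \<subseteq> {..<n}"
  shows "closure_size n (TS @ [T]) z \<le> closure_size n TS z"
proof (cases "z \<in> \<Union>(set TS)")
  case True
  have "finite (var_closure TS z)"
    using assms True by (intro finite_var_closure[of TS n]) auto
  then have "card (var_closure (TS @ [T]) z) \<le> card (var_closure TS z)"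
    using var_closure_append_subset by (rule card_mono)
  with True show ?thesis
    by (simp add: closure_size_def)
next
  case False
  have "card (var_closure (TS @ [T]) z) \<le> n" if "z \<in> \<Union>(set (TS @ [T]))"
    using assms that by (rule card_var_closure_le)
  with False show ?thesis
    by (auto simp: closure_size_def)
qed

lemma closure_size_append_eq:
  assumes "\<forall>T'\<in>set (TS @ [T]). T' \<subseteq> {..<n}"
    and "closure_size n (TS @ [T]) z = closure_size n TS z"
  shows "var_closure (TS @ [T]) z = var_closure TS z"
    and "z \<in> \<Union>(set (TS @ [T])) \<longleftrightarrow> z \<in> \<Union>(set TS)"
proof -
  have *: "var_closure (TS @ [T]) z = var_closure TS z \<and>
    (z \<in> \<Union>(set (TS @ [T])) \<longleftrightarrow> z \<in> \<Union>(set TS))"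
  proof (cases "z \<in> \<Union>(set TS)")
    case True
    then have "card (var_closure (TS @ [T]) z) = card (var_closure TS z)"
      using assms(2) by (auto simp: closure_size_def)
    moreover have "finite (var_closure TS z)"
      using assms(1) True by (intro finite_var_closure[of TS n]) auto
    ultimately show ?thesis
      using True card_subset_eq[OF _ var_closure_append_subset] by auto
  next
    case False
    then have "z \<notin> \<Union>(set (TS @ [T]))"
      using assms card_var_closure_le[OF assms(1), of z] by (auto simp: closure_size_def)
    with False show ?thesis
      using var_closure_append_notin[of z T TS] by auto
  qed
  then show "var_closure (TS @ [T]) z = var_closure TS z"
    and "z \<in> \<Union>(set (TS @ [T])) \<longleftrightarrow> z \<in> \<Union>(set TS)"
    by blast+
qed

lemma potential_at_append_le:
  assumes "\<forall>T'\<in>set (TS @ [T]). T' \<subseteq> {..<n}"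
  shows "potential_at n Y (TS @ [T]) z \<le> potential_at n Y TS z"
proof -
  have "closure_size n (TS @ [T]) z < closure_size n TS z"
    if "has_maximal_closure TS z" "\<not> has_maximal_closure (TS @ [T]) z"
    using that closure_size_append_le[OF assms] closure_size_append_eq[OF assms] has_maximal_closure_append
    by (meson le_neq_implies_less)
  then show ?thesis
    using closure_size_append_le[OF assms, of z] by (auto simp: potential_at_def)
qed

lemma closure_size_append_less:
  assumes bounded: "\<forall>T'\<in>set (TS @ [T]). T' \<subseteq> {..<n}"
    and "z \<in> T" and changed: "var_closure (TS @ [T]) z \<noteq> var_closure TS z"
    and "w \<in> T" and "z \<in> var_closure (TS @ [T]) w"
  shows "closure_size n (TS @ [T]) w < closure_size n TS w"
proof (cases "w \<in> \<Union>(set TS)")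
  case False
  then show ?thesis
    using card_var_closure_le[OF bounded, of w] \<open>w \<in> T\<close> by (auto simp: closure_size_def)
next
  case True
  \<comment> \<open>the old closure of \<open>z\<close> leaves \<open>T\<close>, hence so does the old closure of \<open>w\<close>\<close>
  have "var_closure TS z \<subseteq> var_closure TS w"
    using assms(5) var_closure_append_subset var_closure_trans by blast
  moreover have "\<not> var_closure TS z \<subseteq> T"
    using changed var_closure_append_in[OF \<open>z \<in> T\<close>] by blast
  ultimately have "var_closure (TS @ [T]) w \<subset> var_closure TS w"
    using var_closure_subset[of T "TS @ [T]" w] \<open>w \<in> T\<close> var_closure_append_subset[of TS T w]
    by auto
  moreover have "finite (var_closure TS w)"
    using bounded True by (intro finite_var_closure[of TS n]) auto
  ultimately show ?thesis
    using True by (auto simp: closure_size_def intro: psubset_card_mono)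
qed

lemma potential_at_append_less_if_closure_shrinks:
  assumes bounded: "\<forall>T'\<in>set (TS @ [T]). T' \<subseteq> {..<n}"
    and shrinks: "\<exists>z<n. closure_size n (TS @ [T]) z < closure_size n TS z"
  shows "\<exists>z<n. potential_at n Y (TS @ [T]) z < potential_at n Y TS z"
proof (rule ccontr)
  let ?TS' = "TS @ [T]"
  define Z where "Z = {z. z < n \<and> closure_size n ?TS' z < closure_size n TS z}"
  assume no_drop: "\<not> ?thesis"
  have lost: "has_maximal_closure TS z \<and> \<not> has_maximal_closure ?TS' z" if "z \<in> Z" for z
  proof -
    from that have "z < n" and shrunk: "closure_size n ?TS' z < closure_size n TS z"
      by (auto simp: Z_def)
    with no_drop have "\<not> potential_at n Y ?TS' z < potential_at n Y TS z"
      by blast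
    with shrunk show ?thesis
      by (auto simp: potential_at_def split: if_splits)
  qed
  obtain z0 where "z0 \<in> Z"
    using shrinks by (auto simp: Z_def)
  moreover have "finite (var_closure ?TS' ` Z)"
    by (simp add: Z_def)
  ultimately obtain z where z: "z \<in> Z"
    and max: "\<forall>w\<in>Z. \<not> var_closure ?TS' z \<subset> var_closure ?TS' w"
    using exists_maximal_image by metis
  have old: "z \<in> \<Union>(set TS)"
    using lost[OF z] by (simp add: has_maximal_closure_def)
  have changed: "var_closure ?TS' z \<noteq> var_closure TS z"
    using old z by (auto simp: Z_def closure_size_def)
  then have "z \<in> T"
    using var_closure_append_notin by blast
  have "\<not> maximal_closure ?TS' (var_closure ?TS' z)"
    using lost[OF z] old by (auto simp: has_maximal_closure_def)
  then obtain w where w: "w \<in> T" "var_closure ?TS' z \<subset> var_closure ?TS' w"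
    using maximal_closureI[of T ?TS' z] \<open>z \<in> T\<close> by auto
  have "closure_size n ?TS' w < closure_size n TS w"
    using w var_closure_mem[of z ?TS']
    by (intro closure_size_append_less[OF bounded \<open>z \<in> T\<close> changed]) auto
  with w(1) bounded have "w \<in> Z"
    by (auto simp: Z_def)
  with max w(2) show False
    by blast
qed

lemma var_closure_append_eqI:
  assumes bounded: "\<forall>T'\<in>set (TS @ [T]). T' \<subseteq> {..<n}"
    and unchanged: "\<forall>z<n. closure_size n (TS @ [T]) z = closure_size n TS z"
  shows "var_closure (TS @ [T]) z = var_closure TS z"
proof (cases "z < n")
  case True
  then show ?thesis
    using unchanged closure_size_append_eq(1)[OF bounded] by blast
next
  case False
  then have "z \<notin> T"
    using bounded by auto
  then show ?thesis
    by (rule var_closure_append_notin)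
qed

lemma metafeature_subset_var_closure:
  assumes anchors: "\<forall>i<k. y i \<in> M i \<and> (\<forall>j<k. j \<noteq> i \<longrightarrow> y i \<notin> M j)"
    and targets: "\<forall>T\<in>set TS. \<exists>S\<subseteq>{..<k}. T = \<Union>(M ` S)"
    and "j < k"
  shows "M j \<subseteq> var_closure TS (y j)"
proof -
  have "M j \<subseteq> T" if T: "T \<in> set TS" "y j \<in> T" for T
  proof -
    obtain S where S: "S \<subseteq> {..<k}" "T = \<Union>(M ` S)"
      using bspec[OF targets T(1)] by blast
    then obtain i where "i \<in> S" "y j \<in> M i"
      using T(2) by blast
    moreover have "i = j"
      using anchors \<open>j < k\<close> S(1) \<open>i \<in> S\<close> \<open>y j \<in> M i\<close> by blast
    ultimately show ?thesis
      using S(2) by blast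
  qed
  then show ?thesis
    by (auto simp: var_closure_def)
qed

lemma potential_at_append_less_at_anchor:
  assumes anchors: "\<forall>i<k. y i \<in> M i \<and> (\<forall>j<k. j \<noteq> i \<longrightarrow> y i \<notin> M j)"
    and targets: "\<forall>T'\<in>set (TS @ [T]). \<exists>S\<subseteq>{..<k}. T' = \<Union>(M ` S)"
    and bounded: "\<forall>T'\<in>set (TS @ [T]). T' \<subseteq> {..<n}"
    and H: "consistent_hypothesis TS H"
    and unexplained: "T \<noteq> hyp_union H T"
    and unchanged: "\<forall>z<n. closure_size n (TS @ [T]) z = closure_size n TS z"
  shows "\<exists>z<n. potential_at n (y ` {..<k}) (TS @ [T]) z < potential_at n (y ` {..<k}) TS z"
proof -
  let ?TS' = "TS @ [T]"
  have same: "var_closure ?TS' z = var_closure TS z" for z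
    using bounded unchanged by (rule var_closure_append_eqI)
  obtain v where v: "v \<in> T" "v \<notin> hyp_union H T"
    using unexplained hyp_union_subset[of H T] by blast
  have "finite (Pow T)"
    using bounded finite_subset by auto
  then have "finite (var_closure ?TS' ` T)"
    using var_closure_subset[of T ?TS'] by (auto intro: finite_subset)
  then obtain u where u: "u \<in> T" "var_closure ?TS' v \<subseteq> var_closure ?TS' u"
    and umax: "\<forall>w\<in>T. \<not> var_closure ?TS' u \<subset> var_closure ?TS' w"
    using exists_maximal_image v(1) by metis
  obtain S where S: "S \<subseteq> {..<k}" "T = \<Union>(M ` S)"
    using targets by auto
  then obtain j where j: "j \<in> S" "u \<in> M j"
    using u(1) by blast
  with S(1) have "j < k"
    by blast
  with S j(1) anchors have "y j \<in> T"
    by blast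
  have "M j \<subseteq> var_closure ?TS' (y j)"
    using anchors targets \<open>j < k\<close> by (rule metafeature_subset_var_closure)
  then have "var_closure ?TS' u \<subseteq> var_closure ?TS' (y j)"
    using j(2) var_closure_trans by blast
  with umax \<open>y j \<in> T\<close> have eq: "var_closure ?TS' u = var_closure ?TS' (y j)"
    by blast
  have "has_maximal_closure ?TS' (y j)"
    using maximal_closureI[of T ?TS' u] u(1) umax eq \<open>y j \<in> T\<close>
    by (auto simp: has_maximal_closure_def)
  moreover have "\<not> has_maximal_closure TS (y j)"
  proof
    assume "has_maximal_closure TS (y j)"
    then have "var_closure TS (y j) \<in> H"
      using maximal_closure_in_hypothesis[OF H] by (simp add: has_maximal_closure_def)
    moreover have "var_closure TS (y j) \<subseteq> T"
      using same var_closure_subset[of T ?TS' "y j"] \<open>y j \<in> T\<close> by auto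
    moreover have "v \<in> var_closure TS (y j)"
      using u(2) eq same var_closure_mem[of v ?TS'] by blast
    ultimately have "v \<in> hyp_union H T"
      by (auto simp: hyp_union_def)
    with v(2) show False
      by blast
  qed
  moreover have "y j < n" "y j \<in> y ` {..<k}"
    using \<open>y j \<in> T\<close> bounded \<open>j < k\<close> by auto
  ultimately show ?thesis
    using unchanged by (auto simp: potential_at_def)
qed

lemma potential_append_less:
  assumes anchors: "\<forall>i<k. y i \<in> M i \<and> (\<forall>j<k. j \<noteq> i \<longrightarrow> y i \<notin> M j)"
    and targets: "\<forall>T'\<in>set (TS @ [T]). \<exists>S\<subseteq>{..<k}. T' = \<Union>(M ` S)"
    and bounded: "\<forall>T'\<in>set (TS @ [T]). T' \<subseteq> {..<n}"
    and H: "consistent_hypothesis TS H"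
    and unexplained: "T \<noteq> hyp_union H T"
  shows "potential n (y ` {..<k}) (TS @ [T]) < potential n (y ` {..<k}) TS"
proof -
  have "\<exists>z<n. potential_at n (y ` {..<k}) (TS @ [T]) z < potential_at n (y ` {..<k}) TS z"
  proof (cases "\<exists>z<n. closure_size n (TS @ [T]) z < closure_size n TS z")
    case True
    with bounded show ?thesis
      by (rule potential_at_append_less_if_closure_shrinks)
  next
    case False
    then have "\<forall>z<n. closure_size n (TS @ [T]) z = closure_size n TS z"
      using closure_size_append_le[OF bounded] le_neq_implies_less by blast
    with anchors targets bounded H unexplained show ?thesis
      by (rule potential_at_append_less_at_anchor)
  qed
  then show ?thesis
    unfolding potential_def using potential_at_append_le[OF bounded]
    by (intro sum_strict_mono_ex1) auto
qed

lemma potential_ge: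
  assumes "\<forall>T\<in>set TS. T \<subseteq> {..<n}"
  shows "n \<le> potential n Y TS"
proof -
  have "1 \<le> closure_size n TS z" for z
    using finite_var_closure[OF assms, of z] var_closure_mem[of z TS]
    by (auto simp: closure_size_def Suc_le_eq card_gt_0_iff)
  then have "(\<Sum>z<n. 1) \<le> potential n Y TS"
    unfolding potential_def potential_at_def by (intro sum_mono) (simp add: add_increasing2)
  then show ?thesis
    by simp
qed

lemma potential_Nil_le:
  assumes "finite Y"
  shows "potential n Y [] \<le> n * Suc n + card Y"
proof -
  have "potential n Y [] = (\<Sum>z<n. Suc n + (if z \<in> Y then 1 else 0))"
    by (simp add: potential_def potential_at_def closure_size_def has_maximal_closure_def)
  also have "\<dots> = (\<Sum>z<n. Suc n) + (\<Sum>z<n. if z \<in> Y then 1 else 0)"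
    by (rule sum.distrib)
  also have "(\<Sum>z<n. if z \<in> Y then 1 else 0) = card ({..<n} \<inter> Y)"
    by (simp add: sum.If_cases)
  also have "card ({..<n} \<inter> Y) \<le> card Y"
    using assms by (simp add: card_mono)
  finally show ?thesis
    by simp
qed

subsection \<open>Algorithm 4\<close>

lemma union_of_metafeatures_subset:
  assumes "\<forall>i<k. M i \<subseteq> A" and "\<exists>S\<subseteq>{..<k}. T = \<Union>(M ` S)"
  shows "T \<subseteq> A"
  using assms by auto

definition alg4_invariant :: "(nat \<Rightarrow> nat set) \<Rightarrow> nat \<Rightarrow> nat set list \<times> nat set set \<Rightarrow> bool" where
  "alg4_invariant M k st \<longleftrightarrow>
     (\<forall>T\<in>set (fst st). \<exists>S\<subseteq>{..<k}. T = \<Union>(M ` S)) \<and> consistent_hypothesis (fst st) (snd st)"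

lemma alg4_round_potential:
  assumes vars: "\<forall>i<k. M i \<subseteq> {..<n}"
    and anchors: "\<forall>i<k. y i \<in> M i \<and> (\<forall>j<k. j \<noteq> i \<longrightarrow> y i \<notin> M j)"
    and inv: "alg4_invariant M k st"
    and target: "\<exists>S\<subseteq>{..<k}. T = \<Union>(M ` S)"
  shows "alg4_invariant M k (alg4_round st T) \<and>
    length (fst (alg4_round st T)) + potential n (y ` {..<k}) (fst (alg4_round st T))
      \<le> length (fst st) + potential n (y ` {..<k}) (fst st)"
proof -
  obtain TS H where st: "st = (TS, H)"
    by fastforce
  show ?thesis
  proof (cases "T = hyp_union H T")
    case True
    then show ?thesis
      using inv by (simp add: alg4_round_def st)
  next
    case False
    have targets: "\<forall>T'\<in>set (TS @ [T]). \<exists>S\<subseteq>{..<k}. T' = \<Union>(M ` S)"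
      using inv target by (auto simp: alg4_invariant_def st)
    moreover have bounded: "\<forall>T'\<in>set (TS @ [T]). T' \<subseteq> {..<n}"
      using targets union_of_metafeatures_subset[OF vars] by blast
    moreover have "consistent_hypothesis TS H"
      using inv by (simp add: alg4_invariant_def st)
    ultimately have "potential n (y ` {..<k}) (TS @ [T]) < potential n (y ` {..<k}) TS"
      using anchors False by (intro potential_append_less) auto
    moreover have "consistent_hypothesis (TS @ [T]) (alg3 (TS @ [T]))"
      using bounded finite_subset by (intro alg3_consistent) blast
    ultimately show ?thesis
      using False targets by (simp add: alg4_round_def st alg4_invariant_def)
  qed
qed

lemma foldl_alg4_round_potential:
  assumes vars: "\<forall>i<k. M i \<subseteq> {..<n}"
    and anchors: "\<forall>i<k. y i \<in> M i \<and> (\<forall>j<k. j \<noteq> i \<longrightarrow> y i \<notin> M j)"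
    and "alg4_invariant M k st"
    and "\<forall>T\<in>set Ts. \<exists>S\<subseteq>{..<k}. T = \<Union>(M ` S)"
  shows "alg4_invariant M k (foldl alg4_round st Ts) \<and>
    length (fst (foldl alg4_round st Ts)) + potential n (y ` {..<k}) (fst (foldl alg4_round st Ts))
      \<le> length (fst st) + potential n (y ` {..<k}) (fst st)"
  using assms(3,4)
proof (induction Ts arbitrary: st)
  case (Cons T Ts)
  have "alg4_invariant M k (alg4_round st T) \<and>
    length (fst (alg4_round st T)) + potential n (y ` {..<k}) (fst (alg4_round st T))
      \<le> length (fst st) + potential n (y ` {..<k}) (fst st)"
    using alg4_round_potential[OF vars anchors Cons.prems(1)] Cons.prems(2) by simp
  with Cons.IH[of "alg4_round st T"] Cons.prems(2) show ?case
    by simp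
qed simp

theorem theorem3:
  fixes n k :: nat and M :: "nat \<Rightarrow> nat set" and Ts :: "nat set list"
  assumes vars: "\<forall>i<k. M i \<subseteq> {..<n}"
    and anchor: "anchor_condition M k"
    and targets: "\<forall>T\<in>set Ts. \<exists>S\<subseteq>{..<k}. T = \<Union>(M ` S)"
  shows "length (fst (alg4 Ts)) \<le> n ^ 2 + k"
proof -
  obtain y where anchors: "\<forall>i<k. y i \<in> M i \<and> (\<forall>j<k. j \<noteq> i \<longrightarrow> y i \<notin> M j)"
    using anchor unfolding anchor_condition_def by metis
  let ?Y = "y ` {..<k}"
  have "alg4_invariant M k ([], {})"
    by (simp add: alg4_invariant_def consistent_hypothesis_def)
  from foldl_alg4_round_potential[OF vars anchors this targets]
  have inv: "alg4_invariant M k (alg4 Ts)"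
    and bound: "length (fst (alg4 Ts)) + potential n ?Y (fst (alg4 Ts)) \<le> potential n ?Y []"
    unfolding alg4_def by simp_all
  have "\<forall>T\<in>set (fst (alg4 Ts)). T \<subseteq> {..<n}"
    using inv union_of_metafeatures_subset[OF vars] by (auto simp: alg4_invariant_def)
  then have "n \<le> potential n ?Y (fst (alg4 Ts))"
    by (rule potential_ge)
  moreover have "potential n ?Y [] \<le> n * Suc n + k"
    using potential_Nil_le[of ?Y n] card_image_le[of "{..<k}" y] by simp
  ultimately show ?thesis
    using bound by (simp add: power2_eq_square)
qed

end
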